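(* Let $U\subset\mathbb{R}^2$ be bounded, open and contractible with $\partial U$ locally connected, let $f:D^2\to\overline{U}$ be the continuous extension of the inverse of a conformal map $\psi:U\to\operatorname{int}(D^2)$, and let $B=\{x\in S^1: f(x)\text{ is a cutpoint of }\partial U\}$. For $b\in S^1$ the following are equivalent: (1) $b\notin B$; (2) for every $t_0\in\mathbb{R}$ and every continuous map $g:S^1\to\overline{U}\times\mathbb{R}$ with $g(1)=(f(b),t_0)$ and $g(\theta)\in U\times\mathbb{R}$ for all $\theta\neq 1$, there exists a continuous map $G:D^2\to\overline{U}\times\mathbb{R}$ with $G|_{S^1}=g$ and $G(z)\in U\times\mathbb{R}$ for all $z\in\operatorname{int}(D^2)$.
   Context: $D^2\subset\mathbb{C}$ is the closed unit disk, $S^1=\partial D^2$. Since $\partial U$ is locally connected, $\psi^{-1}$ extends continuously to a surjection $f:D^2\to\overline{U}$. A point $z\in\partial U$ is a cutpoint of $\partial U$ if $\partial U\setminus\{z\}$ is not connected. *)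

theory Defs
  imports "HOL-Complex_Analysis.Complex_Analysis"
begin

definition cutpoint :: "complex set \<Rightarrow> complex \<Rightarrow> bool" where
  "cutpoint X z \<longleftrightarrow> z \<in> X \<and> \<not> connected (X - {z})"

end

theory Submission
  imports Defs
begin

text \<open>Cutpoints of the boundary are exactly the images of points of the circle with more
  than one preimage under f. If f b = f b' with b \<noteq> b', f maps the two radii ending at b and b'
  onto a Jordan curve meeting the boundary of U only at f b. Each side of the curve contains a
  point of U, and a radius of the disc from its preimage to a point c of the circle with
  f c \<noteq> f b cannot cross the curve, so f c is a boundary point on that side; such c exist because
  the holomorphic map f is not constant on any arc of the circle. Conversely, if b is the only
  preimage of f b, the boundary minus f b is the image of the connected punctured circle.

  If b is the only preimage of f b, a loop g in the closure of U touching the boundary only at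
  g 1 = f b lifts through f to a continuous loop on the closed disc, continuity coming from
  compactness and the uniqueness of preimages; this lift extends to the closed disc mapping the
  open disc into itself, f of the extension fills the loop, and the real coordinate is
  extended by Tietze's theorem. If f b has a second preimage, the Jordan curve above, pinned
  at f b, winds once around a boundary point inside it, so no filling can stay in U.\<close>

lemma norm_cis_diff_le: "cmod (cis a - cis b) \<le> \<bar>a - b\<bar>"
proof -
  have "(cmod (cis a - cis b))\<^sup>2 = (cos a - cos b)\<^sup>2 + (sin a - sin b)\<^sup>2"
    by (simp add: cmod_power2)
  also have "\<dots> = 2 - 2 * cos (a - b)"
    by (simp add: cos_diff power2_eq_square algebra_simps)
  also have "\<dots> = 4 * (sin ((a - b) / 2))\<^sup>2"
  proof -
    have half: "2 * ((a - b) / 2) = a - b"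
      by simp
    have "cos (a - b) = 1 - 2 * (sin ((a - b) / 2))\<^sup>2"
      using cos_double_sin[of "(a - b) / 2"] unfolding half .
    then show ?thesis
      by simp
  qed
  also have "\<dots> \<le> 4 * ((a - b) / 2)\<^sup>2"
  proof -
    have "\<bar>sin ((a - b) / 2)\<bar> \<le> \<bar>(a - b) / 2\<bar>"
      by (rule abs_sin_x_le_abs_x)
    then show ?thesis
      by (metis abs_le_square_iff mult_left_mono zero_le_numeral)
  qed
  also have "\<dots> = \<bar>a - b\<bar>\<^sup>2"
    by (simp add: power2_eq_square field_simps)
  finally show ?thesis
    by (rule power2_le_imp_le) simp
qed

lemma root_of_unity_rotation_near:
  fixes N :: nat
  assumes c: "cmod c = 1" and c0: "cmod c0 = 1" and N: "0 < N" and e: "2 * pi / N < e"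
  obtains k :: nat where "k < N" "dist (cis (2 * pi * k / N) * c) c0 < e"
proof -
  define \<theta> where "\<theta> = Arg2pi (c0 / c)"
  have \<theta>: "0 \<le> \<theta>" "\<theta> < 2 * pi"
    using Arg2pi[of "c0 / c"] by (auto simp: \<theta>_def)
  have "cis \<theta> = c0 / c"
    using complex_norm_eq_1_exp[of "c0 / c"] c c0 by (simp add: \<theta>_def norm_divide cis_conv_exp)
  then have c0_eq: "c0 = cis \<theta> * c"
    using c by auto
  define k where "k = nat \<lfloor>\<theta> * N / (2 * pi)\<rfloor>"
  have k: "real k \<le> \<theta> * N / (2 * pi)" "\<theta> * N / (2 * pi) < real k + 1"
    using \<theta> N by (auto simp: k_def)
  have "\<theta> * N / (2 * pi) < N"
    using \<theta> N by (simp add: field_simps)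
  then have "k < N"
    using k(1) by linarith
  have "2 * pi * k / N \<le> \<theta>" "\<theta> < 2 * pi * k / N + 2 * pi / N"
    using k N by (simp_all add: field_simps)
  then have "\<bar>2 * pi * k / N - \<theta>\<bar> < e"
    using e by linarith
  moreover have "dist (cis (2 * pi * k / N) * c) c0 = cmod (cis (2 * pi * k / N) - cis \<theta>)"
    by (simp add: c0_eq dist_norm norm_mult c flip: left_diff_distrib)
  ultimately show thesis
    using that[OF \<open>k < N\<close>] norm_cis_diff_le[of "2 * pi * k / N" \<theta>] by linarith
qed

text \<open>If f = z on an arc, the product of w \<mapsto> f (\<omega> w) - z over the N-th roots of unity \<omega>,
  for N large compared to the arc, vanishes on the whole circle, hence at 0 by the maximum
  modulus principle.\<close>
lemma centre_value_if_constant_on_boundary_arc: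
  fixes f :: "complex \<Rightarrow> complex"
  assumes holf: "f holomorphic_on ball 0 1" and contf: "continuous_on (cball 0 1) f"
    and c0: "c0 \<in> sphere 0 1" and "0 < e"
    and arc: "\<And>c. c \<in> sphere 0 1 \<Longrightarrow> dist c c0 < e \<Longrightarrow> f c = z"
  shows "f 0 = z"
proof -
  obtain N :: nat where N: "2 * pi / e < N"
    using reals_Archimedean2 by blast
  have "0 < 2 * pi / e"
    using \<open>0 < e\<close> by simp
  then have "0 < N"
    using N by linarith
  have Ne: "2 * pi / N < e"
    using N \<open>0 < e\<close> \<open>0 < N\<close> by (simp add: field_simps mult.commute)
  define F where "F = (\<lambda>w. \<Prod>k<N. f (cis (2 * pi * k / N) * w) - z)"
  have holF: "F holomorphic_on ball 0 1"
    unfolding F_def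
  proof (intro holomorphic_on_prod holomorphic_intros)
    fix k
    show "(\<lambda>w. f (cis (2 * pi * k / N) * w)) holomorphic_on ball 0 1"
      by (rule holomorphic_on_compose_gen[OF _ holf, unfolded o_def, of _ "ball 0 1"])
         (auto intro: holomorphic_intros simp: norm_mult)
  qed
  have contF: "continuous_on (cball 0 1) F"
    unfolding F_def
  proof (intro continuous_on_prod continuous_intros)
    fix k
    show "continuous_on (cball 0 1) (\<lambda>w. f (cis (2 * pi * k / N) * w))"
      by (rule continuous_on_compose2[OF contf]) (auto intro: continuous_intros simp: norm_mult)
  qed
  have "F w = 0" if "w \<in> frontier (cball 0 1)" for w
  proof -
    have w: "cmod w = 1"
      using that by simp
    obtain k where k: "k < N" "dist (cis (2 * pi * k / N) * w) c0 < e"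
      using root_of_unity_rotation_near[OF w _ \<open>0 < N\<close> Ne] c0 by auto
    have "f (cis (2 * pi * k / N) * w) = z"
      using arc k(2) w by (simp add: norm_mult)
    then show ?thesis
      unfolding F_def using k(1) by (auto intro: prod_zero)
  qed
  then have "norm (F 0) \<le> 0"
    using maximum_modulus_frontier[of F "cball 0 1" 0 0] holF contF by simp
  then have "(f 0 - z) ^ N = 0"
    by (simp add: F_def)
  then show ?thesis
    by simp
qed

lemma continuous_on_unique_lift:
  fixes F :: "'b::euclidean_space \<Rightarrow> 'c::real_normed_vector"
    and g :: "'a::euclidean_space \<Rightarrow> 'c" and h :: "'a \<Rightarrow> 'b"
  assumes "compact K" and contF: "continuous_on K F" and contg: "continuous_on S g"
    and hK: "h \<in> S \<rightarrow> K" and lift: "\<And>w. w \<in> S \<Longrightarrow> F (h w) = g w"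
    and unique: "\<And>w v. w \<in> S \<Longrightarrow> v \<in> K \<Longrightarrow> F v = g w \<Longrightarrow> v = h w"
  shows "continuous_on S h"
proof -
  define D where "D = (\<lambda>x. F (snd x) - g (fst x))"
  have graph: "(\<lambda>w. (w, h w)) ` S = (S \<times> K) \<inter> D -` {0}"
  proof (intro equalityI subsetI)
    fix x assume "x \<in> (\<lambda>w. (w, h w)) ` S"
    then show "x \<in> (S \<times> K) \<inter> D -` {0}"
      using hK lift by (auto simp: D_def)
  next
    fix x assume x: "x \<in> (S \<times> K) \<inter> D -` {0}"
    then have "snd x = h (fst x)"
      using unique by (auto simp: D_def mem_Times_iff)
    then have "x = (fst x, h (fst x))"
      by (simp add: prod_eq_iff)
    moreover have "fst x \<in> S"
      using x by (simp add: mem_Times_iff)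
    ultimately show "x \<in> (\<lambda>w. (w, h w)) ` S"
      by (rule image_eqI)
  qed
  have "continuous_on (S \<times> K) (\<lambda>x. F (snd x))"
    by (rule continuous_on_compose2[OF contF continuous_on_snd]) auto
  moreover have "continuous_on (S \<times> K) (\<lambda>x. g (fst x))"
    by (rule continuous_on_compose2[OF contg continuous_on_fst]) auto
  ultimately have "continuous_on (S \<times> K) D"
    unfolding D_def by (rule continuous_on_diff)
  then have "closedin (top_of_set (S \<times> K)) ((\<lambda>w. (w, h w)) ` S)"
    unfolding graph by (rule continuous_closedin_preimage) simp
  then show ?thesis
    by (simp only: continuous_closed_graph_eq[OF \<open>compact K\<close> hK])
qed

lemma sphere_map_extends_ball_into_ball:
  fixes h :: "'a::euclidean_space \<Rightarrow> 'b::real_inner"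
  assumes conth: "continuous_on (sphere 0 1) h" and him: "h ` sphere 0 1 \<subseteq> cball 0 1"
  obtains H where "continuous_on (cball 0 1) H" "H ` cball 0 1 \<subseteq> cball 0 1"
    "H ` ball 0 1 \<subseteq> ball 0 1" "\<And>w. w \<in> sphere 0 1 \<Longrightarrow> H w = h w"
proof -
  have "closedin (top_of_set (cball 0 1)) (sphere (0::'a) 1)"
    by (rule closed_subset) auto
  then obtain H0 where H0: "continuous_on (cball 0 1) H0" "H0 ` cball 0 1 \<subseteq> cball 0 1"
      "\<And>w. w \<in> sphere 0 1 \<Longrightarrow> H0 w = h w"
    using Dugundji[OF convex_cball _ _ conth him] by auto
  define H where "H = (\<lambda>w. norm w *\<^sub>R H0 w)"
  have H_le: "norm (H w) \<le> norm w" if "w \<in> cball 0 1" for w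
  proof -
    have "H0 w \<in> cball 0 1"
      using H0(2) that by blast
    then have "norm (H0 w) \<le> 1"
      by simp
    then show ?thesis
      by (simp add: H_def mult_left_le)
  qed
  show thesis
  proof (rule that)
    show "continuous_on (cball 0 1) H"
      unfolding H_def by (intro continuous_intros H0(1))
    show "H ` cball 0 1 \<subseteq> cball 0 1"
      using H_le by fastforce
    show "H ` ball 0 1 \<subseteq> ball 0 1"
    proof (intro image_subsetI)
      fix w :: 'a assume "w \<in> ball 0 1"
      then show "H w \<in> ball 0 1"
        using H_le[of w] by simp
    qed
    show "H w = h w" if "w \<in> sphere 0 1" for w
      using that by (simp add: H_def H0(3))
  qed
qed

definition radial_path :: "complex \<Rightarrow> complex \<Rightarrow> real \<Rightarrow> complex" where
  "radial_path b b' = linepath b 0 +++ linepath 0 b'"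

lemma radial_path_eq:
  "radial_path b b' t = of_real \<bar>1 - 2 * t\<bar> * (if t \<le> 1 / 2 then b else b')"
  by (auto simp: radial_path_def joinpaths_def linepath_def scaleR_conv_of_real algebra_simps)

lemma path_radial_path: "path (radial_path b b')"
  unfolding radial_path_def by (rule path_join_imp) auto

lemma norm_radial_path:
  assumes "cmod b = 1" "cmod b' = 1"
  shows "cmod (radial_path b b' t) = \<bar>1 - 2 * t\<bar>"
  using assms by (simp add: radial_path_eq norm_mult)

lemma radial_path_in_cball:
  "cmod b = 1 \<Longrightarrow> cmod b' = 1 \<Longrightarrow> t \<in> {0..1} \<Longrightarrow> radial_path b b' t \<in> cball 0 1"
  and radial_path_in_ball:
  "cmod b = 1 \<Longrightarrow> cmod b' = 1 \<Longrightarrow> t \<in> {0<..<1} \<Longrightarrow> radial_path b b' t \<in> ball 0 1"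
  by (auto simp: norm_radial_path)

lemma of_real_mult_unit_eq_iff:
  assumes "cmod d1 = 1" "cmod d2 = 1" "0 \<le> r1" "0 \<le> r2"
  shows "complex_of_real r1 * d1 = of_real r2 * d2 \<longleftrightarrow> r1 = r2 \<and> (r1 = 0 \<or> d1 = d2)"
proof
  assume eq: "complex_of_real r1 * d1 = of_real r2 * d2"
  then have "cmod (of_real r1 * d1) = cmod (of_real r2 * d2)"
    by (rule arg_cong)
  then have "r1 = r2"
    using assms by (simp add: norm_mult)
  then show "r1 = r2 \<and> (r1 = 0 \<or> d1 = d2)"
    using eq by auto
qed auto

lemma radial_path_inj:
  assumes "cmod b = 1" "cmod b' = 1" "b \<noteq> b'" and eq: "radial_path b b' s = radial_path b b' t"
  shows "s = t"
proof -
  have units: "cmod (if s \<le> 1 / 2 then b else b') = 1" "cmod (if t \<le> 1 / 2 then b else b') = 1"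
    using assms by auto
  have "\<bar>1 - 2 * s\<bar> = \<bar>1 - 2 * t\<bar> \<and>
      (\<bar>1 - 2 * s\<bar> = 0 \<or> (if s \<le> 1 / 2 then b else b') = (if t \<le> 1 / 2 then b else b'))"
    using eq unfolding radial_path_eq of_real_mult_unit_eq_iff[OF units abs_ge_zero abs_ge_zero] .
  then show ?thesis
    using \<open>b \<noteq> b'\<close> by (auto split: if_splits)
qed

lemma radial_path_avoids_ray:
  assumes "cmod b = 1" "cmod b' = 1" "cmod c = 1" "c \<noteq> b" "c \<noteq> b'" "0 < r"
  shows "complex_of_real r * c \<noteq> radial_path b b' t"
  using assms of_real_mult_unit_eq_iff[of c "if t \<le> 1 / 2 then b else b'" r "\<bar>1 - 2 * t\<bar>"]
  by (auto simp: radial_path_eq)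

definition circlemap :: "(real \<Rightarrow> 'a) \<Rightarrow> complex \<Rightarrow> 'a" where
  "circlemap c = c \<circ> (\<lambda>z. Arg2pi z / (2 * pi))"

lemma Arg2pi_div_2pi_bounds: "Arg2pi z / (2 * pi) \<in> {0..<1}"
  using Arg2pi[of z] by (simp add: field_simps)

lemma circlemap_in_path_image: "circlemap c z \<in> path_image c"
  using Arg2pi_div_2pi_bounds[of z] by (auto simp: circlemap_def path_image_def)

lemma circlemap_1: "circlemap c 1 = pathstart c"
  using Arg2pi_of_real[of 1] by (simp add: circlemap_def pathstart_def)

lemma continuous_on_circlemap:
  assumes "path c" "pathfinish c = pathstart c"
  shows "continuous_on (sphere 0 1) (circlemap c)"
proof -
  have "homotopic_loops UNIV c c"
    using assms by (simp add: homotopic_loops_refl)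
  then show ?thesis
    unfolding circlemap_def
    using homotopic_loops_imp_homotopic_circlemaps homotopic_with_imp_continuous by blast
qed

lemma circlemap_exp:
  assumes "pathfinish c = pathstart c" "t \<in> {0..1}"
  shows "circlemap c (exp (2 * of_real pi * of_real t * \<i>)) = c t"
proof (cases "t = 1")
  case True
  have "exp (2 * of_real pi * \<i>) = 1"
    by (simp add: exp_eq_1)
  then show ?thesis
    using True assms(1) circlemap_1[of c] by (simp add: pathfinish_def)
next
  case False
  then have "Arg2pi (exp (2 * of_real pi * of_real t * \<i>)) = 2 * pi * t"
    using assms(2) by (subst Arg2pi_exp) (auto simp: mult_less_cancel_left)
  then show ?thesis
    by (simp add: circlemap_def)
qed

text \<open>The loop around q has winding number \<plusminus>1, whereas an extension to the disc
  would make its circle map null-homotopic in the plane minus q.\<close>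
lemma simple_loop_circlemap_not_extendable:
  fixes c :: "real \<Rightarrow> complex"
  assumes simple: "simple_path c" and loop: "pathfinish c = pathstart c"
    and q: "q \<in> inside (path_image c)"
    and contG: "continuous_on (cball 0 1) G" and Gq: "G ` cball 0 1 \<subseteq> - {q}"
    and G_sphere: "\<And>z. z \<in> sphere 0 1 \<Longrightarrow> G z = circlemap c z"
  shows False
proof -
  define e where "e = exp \<circ> (\<lambda>t. 2 * of_real pi * of_real t * \<i>)"
  obtain a where "homotopic_with_canon (\<lambda>x. True) (sphere 0 1) (- {q}) (circlemap c) (\<lambda>x. a)"
    using nullhomotopic_from_sphere_extension[of 0 1 "- {q}" "circlemap c"] contG Gq G_sphere
    by auto
  then have null: "homotopic_loops (- {q}) (circlemap c \<circ> e) (\<lambda>t. a)"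
    using homotopic_circlemaps_imp_homotopic_loops by (force simp: e_def o_def)
  have "q \<notin> path_image c"
    using q inside_no_overlap by blast
  then have "homotopic_loops (- {q}) c (circlemap c \<circ> e)"
    using simple_path_imp_path[OF simple] loop circlemap_exp[OF loop]
    by (intro homotopic_loops_eq) (auto simp: e_def)
  then have hom: "homotopic_loops (- {q}) c (\<lambda>t. a)"
    using null by (rule homotopic_loops_trans)
  then have "a \<noteq> q"
    using homotopic_loops_imp_subset by (force simp: path_image_def)
  then have "winding_number c q = 0"
    using winding_number_homotopic_loops[OF hom] winding_number_zero_const by simp
  then show False
    using simple_closed_path_winding_number_inside[OF simple] q
    by (metis one_neq_zero zero_neq_neg_one)
qed

lemma connected_punctured_circle:
  assumes "b \<in> sphere (0::complex) 1"
  shows "connected (sphere 0 1 - {b})"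
proof -
  have "(sphere 0 1 - {b}) homeomorphic {x::complex. 1 \<bullet> x = 0}"
    using assms by (intro homeomorphic_punctured_sphere_hyperplane) auto
  then show ?thesis
    using homeomorphic_connectedness convex_connected[OF convex_hyperplane] by blast
qed

lemma Arg2pi_pos_on_circle:
  assumes "z \<in> sphere 0 1" "z \<noteq> 1"
  shows "0 < Arg2pi z"
proof -
  have "exp (\<i> * of_real (Arg2pi z)) = z"
    using assms(1) complex_norm_eq_1_exp by simp
  then have "Arg2pi z \<noteq> 0"
    using assms(2) by auto
  then show ?thesis
    using Arg2pi_ge_0[of z] by linarith
qed

lemma open_subset_ball_contains_arc:
  fixes W :: "complex set"
  assumes "open W" "W \<noteq> {}" "W \<subseteq> ball 0 1"
  obtains m c0 \<rho> where "m \<in> {0<..<1}" "c0 \<in> sphere 0 1" "0 < \<rho>"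
    "\<And>c. c \<in> sphere 0 1 \<Longrightarrow> dist c c0 < \<rho> \<Longrightarrow> of_real m * c \<in> W"
proof -
  have "\<exists>w0\<in>W. w0 \<noteq> 0"
  proof (rule ccontr)
    assume "\<not> (\<exists>w0\<in>W. w0 \<noteq> 0)"
    then have "W = {0}"
      using assms(2) by auto
    then show False
      using assms(1) not_open_singleton[of "0::complex"] by simp
  qed
  then obtain w0 where "w0 \<in> W" "w0 \<noteq> 0"
    by blast
  obtain \<epsilon> where "0 < \<epsilon>" "ball w0 \<epsilon> \<subseteq> W"
    using openE[OF assms(1) \<open>w0 \<in> W\<close>] by blast
  define m where "m = cmod w0"
  have m: "0 < m" "m < 1"
    using \<open>w0 \<in> W\<close> \<open>w0 \<noteq> 0\<close> assms(3) by (auto simp: m_def)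
  show thesis
  proof (rule that)
    show "m \<in> {0<..<1}" "w0 / of_real m \<in> sphere 0 1" "0 < \<epsilon> / m"
      using m \<open>0 < \<epsilon>\<close> by (simp_all add: m_def norm_divide)
    fix c assume c: "c \<in> sphere 0 1" "dist c (w0 / of_real m) < \<epsilon> / m"
    have "of_real m * c - w0 = of_real m * (c - w0 / of_real m)"
      using m by (simp add: right_diff_distrib)
    then have "dist (of_real m * c) w0 = m * dist c (w0 / of_real m)"
      using m by (simp add: dist_norm norm_mult)
    also have "\<dots> < \<epsilon>"
      using c(2) m(1) by (simp add: field_simps)
    finally show "of_real m * c \<in> W"
      using \<open>ball w0 \<epsilon> \<subseteq> W\<close> by (auto simp: dist_commute)
  qed
qed

definition pinned_loop :: "complex set \<Rightarrow> complex \<times> real \<Rightarrow> (complex \<Rightarrow> complex \<times> real) \<Rightarrow> bool"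
  where "pinned_loop U x g \<longleftrightarrow>
    continuous_on (sphere 0 1) g \<and> g ` sphere 0 1 \<subseteq> closure U \<times> UNIV \<and> g 1 = x \<and>
    (\<forall>\<theta>\<in>sphere 0 1 - {1}. g \<theta> \<in> U \<times> UNIV)"

definition interior_filling ::
    "complex set \<Rightarrow> (complex \<Rightarrow> complex \<times> real) \<Rightarrow> (complex \<Rightarrow> complex \<times> real) \<Rightarrow> bool"
  where "interior_filling U g G \<longleftrightarrow>
    continuous_on (cball 0 1) G \<and> G ` cball 0 1 \<subseteq> closure U \<times> UNIV \<and>
    (\<forall>z\<in>sphere 0 1. G z = g z) \<and> (\<forall>z\<in>ball 0 1. G z \<in> U \<times> UNIV)"

locale conformal_disc_extension =
  fixes U :: "complex set" and \<psi> f :: "complex \<Rightarrow> complex"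
  assumes open_U: "open U"
    and holomorphic_psi: "\<psi> holomorphic_on U" and bij_psi: "bij_betw \<psi> U (ball 0 1)"
    and continuous_f: "continuous_on (cball 0 1) f"
    and f_eq_inv_psi: "\<forall>z\<in>ball 0 1. f z = inv_into U \<psi> z"
    and f_cball: "f ` cball 0 1 \<subseteq> closure U"
begin

lemma f_in_U: "w \<in> ball 0 1 \<Longrightarrow> f w \<in> U"
  and psi_f: "w \<in> ball 0 1 \<Longrightarrow> \<psi> (f w) = w"
  using f_eq_inv_psi bij_betw_imp_surj_on[OF bij_psi] by (auto simp: inv_into_into f_inv_into_f)

lemma psi_in_ball: "u \<in> U \<Longrightarrow> \<psi> u \<in> ball 0 1"
  by (rule bij_betw_apply[OF bij_psi])

lemma f_psi: "u \<in> U \<Longrightarrow> f (\<psi> u) = u"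
  using f_eq_inv_psi psi_in_ball bij_betw_imp_inj_on[OF bij_psi] by simp

lemma inj_on_f: "inj_on f (ball 0 1)"
  by (rule inj_on_inverseI[where g = \<psi>]) (rule psi_f)

lemma holomorphic_f: "f holomorphic_on ball 0 1"
proof -
  obtain g where g: "g holomorphic_on \<psi> ` U" "\<And>u. u \<in> U \<Longrightarrow> g (\<psi> u) = u"
    using holomorphic_has_inverse[OF holomorphic_psi open_U bij_betw_imp_inj_on[OF bij_psi]] by metis
  show ?thesis
  proof (rule holomorphic_transform[of g])
    show "g holomorphic_on ball 0 1"
      using g(1) bij_betw_imp_surj_on[OF bij_psi] by simp
    show "g w = f w" if "w \<in> ball 0 1" for w
      using g(2)[OF f_in_U[OF that]] psi_f[OF that] by simp
  qed
qed

lemma f_sphere_notin_U: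
  assumes w: "w \<in> sphere 0 1"
  shows "f w \<notin> U"
proof
  assume "f w \<in> U"
  have nontriv: "at w within ball 0 1 \<noteq> bot"
    using w by (simp add: trivial_limit_within islimpt_ball)
  have "(f \<longlongrightarrow> f w) (at w within cball 0 1)"
    using continuous_f w by (simp add: continuous_on_def)
  then have "(f \<longlongrightarrow> f w) (at w within ball 0 1)"
    using tendsto_within_subset ball_subset_cball by blast
  moreover have "isCont \<psi> (f w)"
    using holomorphic_on_imp_continuous_on[OF holomorphic_psi] \<open>f w \<in> U\<close> open_U
    by (simp add: continuous_on_eq_continuous_at)
  ultimately have "((\<lambda>x. \<psi> (f x)) \<longlongrightarrow> \<psi> (f w)) (at w within ball 0 1)"
    using isCont_tendsto_compose by blast
  moreover have "\<forall>\<^sub>F x in at w within ball 0 1. \<psi> (f x) = x"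
    by (simp add: eventually_at_filter psi_f)
  ultimately have "((\<lambda>x. x) \<longlongrightarrow> \<psi> (f w)) (at w within ball 0 1)"
    by (rule Lim_transform_eventually)
  then have "\<psi> (f w) = w"
    using tendsto_unique[OF nontriv] tendsto_ident_at by blast
  then show False
    using psi_in_ball[OF \<open>f w \<in> U\<close>] w by simp
qed

lemma f_in_U_iff: "w \<in> cball 0 1 \<Longrightarrow> f w \<in> U \<longleftrightarrow> w \<in> ball 0 1"
  using f_in_U f_sphere_notin_U by (fastforce simp: less_le)

lemma frontier_U_eq: "frontier U = f ` sphere 0 1"
proof
  show "f ` sphere 0 1 \<subseteq> frontier U"
  proof (intro image_subsetI)
    fix w :: complex assume "w \<in> sphere 0 1"
    then have "f w \<in> closure U" "f w \<notin> U"
      using f_cball f_sphere_notin_U sphere_cball by blast+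
    then show "f w \<in> frontier U"
      by (simp add: frontier_def interior_open[OF open_U])
  qed
  have "U \<subseteq> f ` cball 0 1"
  proof
    fix u assume "u \<in> U"
    then show "u \<in> f ` cball 0 1"
      using f_psi psi_in_ball ball_subset_cball by (metis image_eqI subsetD)
  qed
  moreover have "closed (f ` cball 0 1)"
    by (simp add: compact_imp_closed compact_continuous_image continuous_f)
  ultimately have "closure U \<subseteq> f ` cball 0 1"
    by (rule closure_minimal)
  show "frontier U \<subseteq> f ` sphere 0 1"
  proof
    fix p assume "p \<in> frontier U"
    then have p: "p \<in> closure U" "p \<notin> U"
      by (auto simp: frontier_def interior_open[OF open_U])
    then obtain v where v: "v \<in> cball 0 1" "p = f v"
      using \<open>closure U \<subseteq> f ` cball 0 1\<close> by blast
    then have "v \<in> sphere 0 1"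
      using f_in_U_iff p(2) by (auto simp: less_le)
    then show "p \<in> f ` sphere 0 1"
      using v(2) by blast
  qed
qed

lemma f_sphere_not_locally_constant:
  assumes "c0 \<in> sphere 0 1" "0 < e" "z \<notin> U"
  obtains c where "c \<in> sphere 0 1" "dist c c0 < e" "f c \<noteq> z"
proof (rule ccontr)
  assume "\<not> thesis"
  then have "\<And>c. c \<in> sphere 0 1 \<Longrightarrow> dist c c0 < e \<Longrightarrow> f c = z"
    using that by blast
  then have "f 0 = z"
    by (rule centre_value_if_constant_on_boundary_arc[OF holomorphic_f continuous_f assms(1,2)])
  then show False
    using f_in_U[of 0] assms(3) by simp
qed

lemma radius_into_open_set:
  assumes "open S" "S \<inter> U \<noteq> {}" "z \<notin> U"
  obtains c r where "c \<in> sphere 0 1" "r \<in> {0<..<1}" "f c \<noteq> z" "f (of_real r * c) \<in> S"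
proof -
  define W where "W = ball 0 1 \<inter> f -` S"
  have "open W"
    unfolding W_def
    by (rule continuous_open_preimage[OF continuous_on_subset[OF continuous_f ball_subset_cball]
          open_ball assms(1)])
  obtain u where "u \<in> S" "u \<in> U"
    using assms(2) by blast
  then have "\<psi> u \<in> W"
    using psi_in_ball f_psi by (simp add: W_def)
  then have "W \<noteq> {}"
    by blast
  moreover have "W \<subseteq> ball 0 1"
    by (simp add: W_def)
  ultimately obtain m c0 \<rho> where m: "m \<in> {0<..<1}" and c0: "c0 \<in> sphere 0 1" and "0 < \<rho>"
    and arc: "\<And>c. c \<in> sphere 0 1 \<Longrightarrow> dist c c0 < \<rho> \<Longrightarrow> of_real m * c \<in> W"
    using open_subset_ball_contains_arc[OF \<open>open W\<close>] by blast
  obtain c where c: "c \<in> sphere 0 1" "dist c c0 < \<rho>" "f c \<noteq> z"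
    by (rule f_sphere_not_locally_constant[OF c0 \<open>0 < \<rho>\<close> assms(3)])
  have "f (of_real m * c) \<in> S"
    using arc[OF c(1,2)] by (simp add: W_def)
  then show thesis
    using that[OF c(1) m c(3)] by blast
qed

definition crosscut :: "complex \<Rightarrow> complex \<Rightarrow> real \<Rightarrow> complex" where
  "crosscut b b' = f \<circ> radial_path b b'"

context
  fixes b b' :: complex
  assumes b: "b \<in> sphere 0 1" and b': "b' \<in> sphere 0 1"
begin

lemma crosscut_in_closure_U: "t \<in> {0..1} \<Longrightarrow> crosscut b b' t \<in> closure U"
  using f_cball radial_path_in_cball b b' by (auto simp: crosscut_def)

lemma crosscut_in_U_iff:
  assumes "t \<in> {0..1}"
  shows "crosscut b b' t \<in> U \<longleftrightarrow> t \<in> {0<..<1}"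
proof -
  have "crosscut b b' t \<in> U \<longleftrightarrow> radial_path b b' t \<in> ball 0 1"
    using f_in_U_iff radial_path_in_cball assms b b' by (simp add: crosscut_def)
  also have "\<dots> \<longleftrightarrow> \<bar>1 - 2 * t\<bar> < 1"
    using b b' by (simp add: norm_radial_path)
  finally show ?thesis
    by auto
qed

context
  assumes "b \<noteq> b'" and f_b': "f b' = f b"
begin

lemma crosscut_endpoints: "t \<in> {0..1} \<Longrightarrow> t \<notin> {0<..<1} \<Longrightarrow> crosscut b b' t = f b"
  using f_b' by (auto simp: crosscut_def radial_path_eq)

lemma pathstart_crosscut: "pathstart (crosscut b b') = f b"
  and closed_crosscut: "pathfinish (crosscut b b') = pathstart (crosscut b b')"
  using crosscut_endpoints by (auto simp: pathstart_def pathfinish_def)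

lemma simple_path_crosscut: "simple_path (crosscut b b')"
proof -
  have "path_image (radial_path b b') \<subseteq> cball 0 1"
    using radial_path_in_cball b b' by (auto simp: path_image_def)
  then have "path (crosscut b b')"
    unfolding crosscut_def
    by (intro path_continuous_image[OF path_radial_path] continuous_on_subset[OF continuous_f])
  moreover have "loop_free (crosscut b b')"
    unfolding loop_free_def
  proof (intro ballI impI)
    fix s t :: real
    assume st: "s \<in> {0..1}" "t \<in> {0..1}" and eq: "crosscut b b' s = crosscut b b' t"
    show "s = t \<or> s = 0 \<and> t = 1 \<or> s = 1 \<and> t = 0"
    proof (cases "s \<in> {0<..<1}")
      case True
      then have "t \<in> {0<..<1}"
        using eq crosscut_in_U_iff[OF st(1)] crosscut_in_U_iff[OF st(2)] by simp
      then have "radial_path b b' s = radial_path b b' t"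
        using inj_onD[OF inj_on_f _ radial_path_in_ball[OF _ _ True] radial_path_in_ball] eq b b'
        by (simp add: crosscut_def)
      then show ?thesis
        using radial_path_inj[of b b' s t] b b' \<open>b \<noteq> b'\<close> by simp
    next
      case False
      then have "t \<notin> {0<..<1}"
        using eq crosscut_in_U_iff[OF st(1)] crosscut_in_U_iff[OF st(2)] by simp
      then show ?thesis
        using False st by auto
    qed
  qed
  ultimately show ?thesis
    by (simp add: simple_path_def)
qed

lemma path_image_crosscut_subset: "path_image (crosscut b b') \<subseteq> insert (f b) U"
proof
  fix x assume "x \<in> path_image (crosscut b b')"
  then obtain t where "t \<in> {0..1}" "x = crosscut b b' t"
    by (auto simp: path_image_def)
  then show "x \<in> insert (f b) U"
    using crosscut_in_U_iff crosscut_endpoints by (cases "t \<in> {0<..<1}") auto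
qed

lemma f_0_in_crosscut: "f 0 \<in> path_image (crosscut b b')"
proof -
  have "crosscut b b' (1 / 2) = f 0"
    by (simp add: crosscut_def radial_path_eq)
  then show ?thesis
    unfolding path_image_def by (force intro: image_eqI[where x = "1 / 2"])
qed

lemma radius_avoids_crosscut:
  assumes c: "c \<in> sphere 0 1" "f c \<noteq> f b" and r: "r \<in> {0<..<1}"
  shows "f (of_real r * c) \<notin> path_image (crosscut b b')"
proof
  assume "f (of_real r * c) \<in> path_image (crosscut b b')"
  then obtain t where t: "t \<in> {0..1}" "f (of_real r * c) = crosscut b b' t"
    by (auto simp: path_image_def)
  have rc: "of_real r * c \<in> ball 0 1"
    using c r by (simp add: norm_mult)
  have "crosscut b b' t \<in> U"
    using f_in_U[OF rc] t(2) by simp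
  then have "t \<in> {0<..<1}"
    using crosscut_in_U_iff[OF t(1)] by simp
  then have "of_real r * c = radial_path b b' t"
    using inj_onD[OF inj_on_f _ rc radial_path_in_ball] t(2) b b' by (simp add: crosscut_def)
  moreover have "c \<noteq> b" "c \<noteq> b'"
    using c f_b' by auto
  ultimately show False
    using radial_path_avoids_ray b b' c r by auto
qed

lemma radius_endpoint_in_side:
  assumes "open S" and frontier_S: "frontier S = path_image (crosscut b b')"
    and c: "c \<in> sphere 0 1" "f c \<noteq> f b" and r: "r \<in> {0<..<1}"
    and start: "f (of_real r * c) \<in> S"
  shows "f c \<in> S"
proof -
  define \<gamma> where "\<gamma> = (\<lambda>t::real. f (of_real t * c))"
  have cont: "continuous_on {r..1} \<gamma>"
    unfolding \<gamma>_def using c r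
    by (intro continuous_on_compose2[OF continuous_f] continuous_intros) (auto simp: norm_mult)
  have "\<gamma> t \<notin> frontier S" if "t \<in> {r..<1}" for t
    using radius_avoids_crosscut[OF c, of t] r that frontier_S by (simp add: \<gamma>_def)
  then have "\<gamma> ` {r..<1} \<inter> frontier S = {}"
    by blast
  moreover have "connected (\<gamma> ` {r..<1})"
    using cont by (intro connected_continuous_image) (auto elim: continuous_on_subset)
  moreover have "\<gamma> r \<in> \<gamma> ` {r..<1} \<inter> S"
    using start r by (simp add: \<gamma>_def)
  ultimately have "\<gamma> ` {r..<1} - S = {}"
    using connected_Int_frontier[of "\<gamma> ` {r..<1}" S] by auto
  then have "\<gamma> ` {r..<1} \<subseteq> S"
    by blast
  then have "\<gamma> ` closure {r..<1} \<subseteq> closure S"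
    using cont r closure_subset by (intro image_closure_subset) auto
  moreover have "1 \<in> closure {r..<1}"
    using r by simp
  ultimately have "f c \<in> closure S"
    by (force simp: \<gamma>_def)
  moreover have "f c \<notin> frontier S"
    using frontier_S path_image_crosscut_subset f_sphere_notin_U[OF c(1)] c(2) by blast
  ultimately show ?thesis
    using \<open>open S\<close> by (auto simp: frontier_def interior_open)
qed

lemma frontier_U_meets_side:
  assumes "open S" and frontier_S: "frontier S = path_image (crosscut b b')"
  obtains q where "q \<in> frontier U" "q \<in> S" "q \<noteq> f b"
proof -
  have "f 0 \<in> closure S \<inter> U"
    using f_0_in_crosscut frontier_S f_in_U[of 0] by (auto simp: frontier_def)
  then have "S \<inter> U \<noteq> {}"
    using open_Int_closure_eq_empty[OF open_U] by blast
  then obtain c r where c: "c \<in> sphere 0 1" "f c \<noteq> f b" and r: "r \<in> {0<..<1}"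
    and start: "f (of_real r * c) \<in> S"
    by (rule radius_into_open_set[OF \<open>open S\<close> _ f_sphere_notin_U[OF b]])
  have "f c \<in> S"
    by (rule radius_endpoint_in_side[OF \<open>open S\<close> frontier_S c r start])
  moreover have "f c \<in> frontier U"
    using frontier_U_eq c(1) by blast
  ultimately show thesis
    using that c(2) by blast
qed

lemma cutpoint_if_two_preimages: "cutpoint (frontier U) (f b)"
proof -
  let ?J = "path_image (crosscut b b')"
  have Jordan: "open (inside ?J)" "open (outside ?J)" "inside ?J \<inter> outside ?J = {}"
      "inside ?J \<union> outside ?J = - ?J" "frontier (inside ?J) = ?J" "frontier (outside ?J) = ?J"
    using Jordan_inside_outside[OF simple_path_crosscut closed_crosscut] by auto
  obtain q1 where q1: "q1 \<in> frontier U" "q1 \<in> inside ?J" "q1 \<noteq> f b"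
    by (rule frontier_U_meets_side[OF Jordan(1,5)])
  obtain q2 where q2: "q2 \<in> frontier U" "q2 \<in> outside ?J" "q2 \<noteq> f b"
    by (rule frontier_U_meets_side[OF Jordan(2,6)])
  have sides: "frontier U - {f b} \<subseteq> inside ?J \<union> outside ?J"
    using path_image_crosscut_subset Jordan(4) frontier_disjoint_eq[THEN iffD2, OF open_U]
    by auto
  have "\<not> connected (frontier U - {f b})"
  proof
    assume "connected (frontier U - {f b})"
    then have "inside ?J \<inter> (frontier U - {f b}) = {} \<or> outside ?J \<inter> (frontier U - {f b}) = {}"
      by (rule connectedD[OF _ Jordan(1,2) _ sides]) (use Jordan(3) in blast)
    then show False
      using q1 q2 by blast
  qed
  moreover have "f b \<in> frontier U"
    using frontier_U_eq b by blast
  ultimately show ?thesis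
    by (simp add: cutpoint_def)
qed

lemma pinned_loop_crosscut: "pinned_loop U (f b, 0) (\<lambda>z. (circlemap (crosscut b b') z, 0))"
  unfolding pinned_loop_def
proof (intro conjI ballI)
  show "continuous_on (sphere 0 1) (\<lambda>z. (circlemap (crosscut b b') z, 0::real))"
    using continuous_on_circlemap[OF simple_path_imp_path[OF simple_path_crosscut] closed_crosscut]
    by (intro continuous_intros)
  show "(\<lambda>z. (circlemap (crosscut b b') z, 0::real)) ` sphere 0 1 \<subseteq> closure U \<times> UNIV"
    using crosscut_in_closure_U Arg2pi_div_2pi_bounds by (force simp: circlemap_def)
  show "(circlemap (crosscut b b') 1, 0::real) = (f b, 0)"
    by (simp add: circlemap_1 pathstart_crosscut)
  show "(circlemap (crosscut b b') \<theta>, 0::real) \<in> U \<times> UNIV" if "\<theta> \<in> sphere 0 1 - {1}" for \<theta>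
    using Arg2pi_div_2pi_bounds[of \<theta>] Arg2pi_pos_on_circle[of \<theta>] that crosscut_in_U_iff
    by (simp add: circlemap_def)
qed

lemma no_interior_filling_crosscut:
  "\<not> interior_filling U (\<lambda>z. (circlemap (crosscut b b') z, 0)) G"
proof
  assume G: "interior_filling U (\<lambda>z. (circlemap (crosscut b b') z, 0)) G"
  let ?J = "path_image (crosscut b b')"
  have "open (inside ?J)" "frontier (inside ?J) = ?J"
    using Jordan_inside_outside[OF simple_path_crosscut closed_crosscut] by auto
  then obtain q where q: "q \<in> frontier U" "q \<in> inside ?J"
    by (rule frontier_U_meets_side)
  have "q \<notin> ?J"
    using q(2) inside_no_overlap by blast
  have G_sphere: "fst (G z) = circlemap (crosscut b b') z" if "z \<in> sphere 0 1" for z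
    using that G by (simp add: interior_filling_def)
  have "fst (G z) \<noteq> q" if "z \<in> cball 0 1" for z
  proof (cases "z \<in> ball 0 1")
    case True
    then have "fst (G z) \<in> U"
      using G by (auto simp: interior_filling_def mem_Times_iff)
    then show ?thesis
      using q(1) frontier_disjoint_eq[THEN iffD2, OF open_U] by blast
  next
    case False
    then have "z \<in> sphere 0 1"
      using that by simp
    then show ?thesis
      using G_sphere circlemap_in_path_image \<open>q \<notin> ?J\<close> by metis
  qed
  then have "(\<lambda>z. fst (G z)) ` cball 0 1 \<subseteq> - {q}"
    by blast
  moreover have "continuous_on (cball 0 1) (\<lambda>z. fst (G z))"
    using G by (auto simp: interior_filling_def intro: continuous_intros)
  ultimately show False
    using simple_loop_circlemap_not_extendable[OF simple_path_crosscut closed_crosscut q(2)] G_sphere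
    by blast
qed

end

end

lemma cutpoint_iff_two_preimages:
  assumes b: "b \<in> sphere 0 1"
  shows "cutpoint (frontier U) (f b) \<longleftrightarrow> (\<exists>b'\<in>sphere 0 1. b' \<noteq> b \<and> f b' = f b)"
proof
  assume cut: "cutpoint (frontier U) (f b)"
  show "\<exists>b'\<in>sphere 0 1. b' \<noteq> b \<and> f b' = f b"
  proof (rule ccontr)
    assume "\<not> (\<exists>b'\<in>sphere 0 1. b' \<noteq> b \<and> f b' = f b)"
    then have "frontier U - {f b} = f ` (sphere 0 1 - {b})"
      using frontier_U_eq by auto
    moreover have "connected (f ` (sphere 0 1 - {b}))"
      using connected_punctured_circle[OF b] continuous_on_subset[OF continuous_f]
      by (rule connected_continuous_image[rotated]) auto
    ultimately show False
      using cut by (simp add: cutpoint_def)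
  qed
next
  assume "\<exists>b'\<in>sphere 0 1. b' \<noteq> b \<and> f b' = f b"
  then show "cutpoint (frontier U) (f b)"
    using cutpoint_if_two_preimages[OF b] by metis
qed

lemma unique_preimage_if_not_cutpoint:
  assumes b: "b \<in> sphere 0 1" and not_cut: "\<not> cutpoint (frontier U) (f b)"
    and v: "v \<in> cball 0 1" "f v = f b"
  shows "v = b"
proof -
  have "f v \<notin> U"
    using v(2) f_sphere_notin_U[OF b] by simp
  then have "v \<in> sphere 0 1"
    using v(1) f_in_U by (auto simp: less_le)
  then show ?thesis
    using v(2) not_cut cutpoint_iff_two_preimages[OF b] by auto
qed

lemma lift_pinned_loop:
  fixes \<gamma> :: "complex \<Rightarrow> complex"
  assumes b: "b \<in> sphere 0 1" and not_cut: "\<not> cutpoint (frontier U) (f b)"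
    and cont: "continuous_on (sphere 0 1) \<gamma>" and \<gamma>_1: "\<gamma> 1 = f b"
    and \<gamma>_U: "\<And>\<theta>. \<theta> \<in> sphere 0 1 - {1} \<Longrightarrow> \<gamma> \<theta> \<in> U"
  obtains h :: "complex \<Rightarrow> complex" where "continuous_on (sphere 0 1) h"
    "h ` sphere 0 1 \<subseteq> cball 0 1" "\<And>w. w \<in> sphere 0 1 \<Longrightarrow> f (h w) = \<gamma> w"
proof -
  define h where "h = (\<lambda>w. if w = 1 then b else \<psi> (\<gamma> w))"
  have h_cball: "h \<in> sphere 0 1 \<rightarrow> cball 0 1"
  proof
    fix w :: complex assume w: "w \<in> sphere 0 1"
    show "h w \<in> cball 0 1"
    proof (cases "w = 1")
      case False
      then have "h w \<in> ball 0 1"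
        using w \<gamma>_U psi_in_ball by (simp add: h_def)
      then show ?thesis
        by simp
    qed (use b in \<open>simp add: h_def\<close>)
  qed
  have lift: "f (h w) = \<gamma> w" if "w \<in> sphere 0 1" for w
    using that \<gamma>_1 \<gamma>_U f_psi by (simp add: h_def)
  have unique: "v = h w" if w: "w \<in> sphere 0 1" and v: "v \<in> cball 0 1" "f v = \<gamma> w" for w v
  proof (cases "w = 1")
    case True
    then show ?thesis
      using unique_preimage_if_not_cutpoint[OF b not_cut v(1)] v(2) \<gamma>_1 by (simp add: h_def)
  next
    case False
    then have "f v \<in> U"
      using w v(2) \<gamma>_U by simp
    then have "v \<in> ball 0 1"
      using v(1) f_in_U_iff by blast
    then show ?thesis
      using False v(2) psi_f[of v] by (simp add: h_def)
  qed
  show thesis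
  proof (rule that)
    show "continuous_on (sphere 0 1) h"
      by (rule continuous_on_unique_lift[OF compact_cball continuous_f cont h_cball lift unique])
    show "h ` sphere 0 1 \<subseteq> cball 0 1"
      using h_cball by blast
  qed (rule lift)
qed

lemma filling_if_not_cutpoint:
  assumes b: "b \<in> sphere 0 1" and not_cut: "\<not> cutpoint (frontier U) (f b)"
    and g: "pinned_loop U (f b, t0) g"
  shows "\<exists>G. interior_filling U g G"
proof -
  have cont: "continuous_on (sphere 0 1) (\<lambda>w. fst (g w))" "continuous_on (sphere 0 1) (\<lambda>w. snd (g w))"
    using g by (auto simp: pinned_loop_def intro: continuous_intros)
  have "fst (g 1) = f b" "\<And>\<theta>. \<theta> \<in> sphere 0 1 - {1} \<Longrightarrow> fst (g \<theta>) \<in> U"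
    using g by (auto simp: pinned_loop_def mem_Times_iff)
  then obtain h where h: "continuous_on (sphere 0 1) h" "h ` sphere 0 1 \<subseteq> cball 0 1"
      "\<And>w. w \<in> sphere 0 1 \<Longrightarrow> f (h w) = fst (g w)"
    by (rule lift_pinned_loop[OF b not_cut cont(1)]) auto
  obtain H where H: "continuous_on (cball 0 1) H" "H ` cball 0 1 \<subseteq> cball 0 1"
      "H ` ball 0 1 \<subseteq> ball 0 1" "\<And>w. w \<in> sphere 0 1 \<Longrightarrow> H w = h w"
    using sphere_map_extends_ball_into_ball[OF h(1,2)] by blast
  have "closedin (top_of_set (cball 0 1)) (sphere (0::complex) 1)"
    by (rule closed_subset) auto
  then obtain T where T: "continuous_on (cball 0 1) T" "\<And>w. w \<in> sphere 0 1 \<Longrightarrow> T w = snd (g w)"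
    using Tietze_unbounded[OF cont(2)] by blast
  define G where "G = (\<lambda>w. (f (H w), T w))"
  have "interior_filling U g G"
    unfolding interior_filling_def
  proof (intro conjI ballI)
    show "continuous_on (cball 0 1) G"
      unfolding G_def using H(1,2) T(1)
      by (intro continuous_on_Pair continuous_on_compose2[OF continuous_f]) auto
    show "G ` cball 0 1 \<subseteq> closure U \<times> UNIV"
      using f_cball H(2) by (auto simp: G_def)
    show "G z = g z" if "z \<in> sphere 0 1" for z
      using that H(4) h(3) T(2) by (simp add: G_def prod_eq_iff)
    show "G z \<in> U \<times> UNIV" if "z \<in> ball 0 1" for z
    proof -
      have "H z \<in> ball 0 1"
        using H(3) that by blast
      then show ?thesis
        using f_in_U by (simp add: G_def)
    qed
  qed
  then show ?thesis
    by blast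
qed

lemma no_filling_if_cutpoint:
  assumes b: "b \<in> sphere 0 1" and cut: "cutpoint (frontier U) (f b)"
  shows "\<exists>g. pinned_loop U (f b, 0) g \<and> \<not> (\<exists>G. interior_filling U g G)"
proof -
  obtain b' where b': "b' \<in> sphere 0 1" "b \<noteq> b'" "f b' = f b"
    using cut cutpoint_iff_two_preimages[OF b] by metis
  then show ?thesis
    using pinned_loop_crosscut[OF b b'] no_interior_filling_crosscut[OF b b'] by blast
qed

end

theorem mainTheorem11:
  fixes U :: "complex set" and \<psi> f :: "complex \<Rightarrow> complex" and b :: complex
  assumes "bounded U" and "open U" and "contractible U"
    and "locally connected (frontier U)"
    and "\<psi> holomorphic_on U" and "bij_betw \<psi> U (ball 0 1)"
    and "continuous_on (cball 0 1) f"
    and "\<forall>z\<in>ball 0 1. f z = inv_into U \<psi> z"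
    and "f ` cball 0 1 \<subseteq> closure U"
    and "b \<in> sphere 0 1"
  shows "b \<notin> {x \<in> sphere 0 1. cutpoint (frontier U) (f x)}
    \<longleftrightarrow>
    (\<forall>(t0::real) (g :: complex \<Rightarrow> complex \<times> real).
        continuous_on (sphere 0 1) g
      \<and> g ` sphere 0 1 \<subseteq> closure U \<times> UNIV
      \<and> g 1 = (f b, t0)
      \<and> (\<forall>\<theta>\<in>sphere 0 1 - {1}. g \<theta> \<in> U \<times> UNIV)
      \<longrightarrow> (\<exists>G :: complex \<Rightarrow> complex \<times> real.
            continuous_on (cball 0 1) G
          \<and> G ` cball 0 1 \<subseteq> closure U \<times> UNIV
          \<and> (\<forall>z\<in>sphere 0 1. G z = g z)
          \<and> (\<forall>z\<in>ball 0 1. G z \<in> U \<times> UNIV)))"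
proof -
  \<comment> \<open>Boundedness, contractibility and local connectivity are only needed for the existence
    of the extension f, which is assumed here.\<close>
  interpret conformal_disc_extension U \<psi> f
    using assms by unfold_locales auto
  show ?thesis
  proof (cases "cutpoint (frontier U) (f b)")
    case True
    then obtain g where "pinned_loop U (f b, 0) g" "\<not> (\<exists>G. interior_filling U g G)"
      using no_filling_if_cutpoint[OF assms(10)] by blast
    moreover have "b \<in> {x \<in> sphere 0 1. cutpoint (frontier U) (f x)}"
      using True assms(10) by simp
    ultimately show ?thesis
      unfolding pinned_loop_def interior_filling_def by blast
  next
    case False
    then show ?thesis
      using filling_if_not_cutpoint[OF assms(10) False]
      unfolding pinned_loop_def interior_filling_def by blast
  qed
qed

end
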